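(* Let $v$ be an aperiodic infinite word over $\{0,1\}$ such that $\Phi_{\mathbb{R}}(v)$ exists. Then for all but finitely many $\ell\ge1$, if $u$ denotes the prefix of $v$ of length $\ell$, the series $\Phi_{\mathbb{R}}(u^\infty)$ of the purely periodic word $u^\infty=uuu\cdots$ converges and $$\Phi_{\mathbb{R}}(u^\infty)=C_{\mathbb{R}}(u).$$
   Context: For an infinite $0$-$1$ word $w$ with $1$'s at positions $d_0<d_1<\cdots$, $\Phi_{\mathbb{R}}(w)=-\sum_{i\ge0}2^{d_i}/3^{i+1}$, said to exist if the series converges in $\mathbb{R}$. For a finite word $u$ of length $\ell\ge1$ and height $h$ with $1$'s at positions $d_0<\dots<d_{h-1}$, $\varphi(u)=\sum_{i=0}^{h-1}3^{h-1-i}2^{d_i}$ and $C_{\mathbb{R}}(u)=\varphi(u)/(2^\ell-3^h)$. *)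

theory Defs
  imports Complex_Main "HOL-Library.Infinite_Set"
begin

text \<open>Infinite 0-1 words are functions nat => bool (True = letter 1);
finite words are bool lists.\<close>

definition ones :: "(nat \<Rightarrow> bool) \<Rightarrow> nat set" where
  "ones w = {n. w n}"

text \<open>Position of the i-th letter 1 (d_i), counted from 0.\<close>
definition dpos :: "(nat \<Rightarrow> bool) \<Rightarrow> nat \<Rightarrow> nat" where
  "dpos w i = enumerate (ones w) i"

definition Phi_R_has :: "(nat \<Rightarrow> bool) \<Rightarrow> real \<Rightarrow> bool" where
  "Phi_R_has w x \<longleftrightarrow>
     (infinite (ones w) \<and> ((\<lambda>i. 2 ^ dpos w i / 3 ^ (i + 1)) sums (- x))) \<or>
     (finite (ones w) \<and> x = - (\<Sum>i<card (ones w). 2 ^ dpos w i / 3 ^ (i + 1)))"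

definition Phi_R_exists :: "(nat \<Rightarrow> bool) \<Rightarrow> bool" where
  "Phi_R_exists w \<longleftrightarrow> (\<exists>x. Phi_R_has w x)"

definition Phi_R :: "(nat \<Rightarrow> bool) \<Rightarrow> real" where
  "Phi_R w = (THE x. Phi_R_has w x)"

definition fones :: "bool list \<Rightarrow> nat set" where
  "fones u = {k. k < length u \<and> u ! k}"

definition height :: "bool list \<Rightarrow> nat" where
  "height u = card (fones u)"

definition fphi :: "bool list \<Rightarrow> nat" where
  "fphi u = (\<Sum>i<height u. 3 ^ (height u - 1 - i) * 2 ^ enumerate (fones u) i)"

definition C_R :: "bool list \<Rightarrow> real" where
  "C_R u = real (fphi u) / (2 ^ length u - 3 ^ height u)"

definition prefix_word :: "(nat \<Rightarrow> bool) \<Rightarrow> nat \<Rightarrow> bool list" where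
  "prefix_word v l = map v [0..<l]"

definition pow_inf :: "bool list \<Rightarrow> nat \<Rightarrow> bool" where
  "pow_inf u = (\<lambda>n. u ! (n mod length u))"

text \<open>Aperiodic = not ultimately periodic.\<close>
definition ult_periodic :: "(nat \<Rightarrow> bool) \<Rightarrow> bool" where
  "ult_periodic v \<longleftrightarrow> (\<exists>p>0. \<exists>N. \<forall>n\<ge>N. v (n + p) = v n)"

end

theory Submission imports Defs begin

text \<open>Since the terms \<open>2^d\<^sub>i / 3^(i+1)\<close> of \<open>\<Phi>\<^sub>\<real>(v)\<close> tend to zero, eventually
\<open>2^d\<^sub>i < 3^i\<close>. A long prefix \<open>u\<close> of \<open>v\<close> of height \<open>h\<close> satisfies \<open>|u| \<le> d\<^sub>h\<close>, hence
\<open>2^|u| < 3^h\<close>. For such a word the series of \<open>u\<^sup>\<infinity>\<close> splits into blocks of \<open>h\<close> terms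
forming a geometric series of ratio \<open>2^|u| / 3^h < 1\<close>, whose sum is \<open>-C\<^sub>\<real>(u)\<close>.\<close>

lemma enumerate_range_strict_mono:
  fixes f :: "nat \<Rightarrow> nat"
  assumes sm: "strict_mono f"
  shows "enumerate (range f) n = f n"
proof -
  have inf: "infinite (range f)"
    using sm strict_mono_imp_inj_on finite_imageD infinite_UNIV_nat by blast
  show ?thesis
  proof (induction n)
    case 0
    show ?case unfolding enumerate_0
      by (rule Least_equality) (auto simp: sm strict_mono_less_eq)
  next
    case (Suc n)
    show ?case unfolding enumerate_Suc''[OF inf] Suc
    proof (rule Least_equality)
      show "f (Suc n) \<in> range f \<and> f n < f (Suc n)"
        using sm by (auto simp: strict_mono_def)
    next
      fix y assume "y \<in> range f \<and> f n < y"
      then obtain m where "y = f m" "f n < f m" by auto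
      then show "f (Suc n) \<le> y"
        using sm by (simp add: strict_mono_less strict_mono_less_eq Suc_le_eq)
    qed
  qed
qed

lemma sums_if_nonneg_group_sums:
  fixes t :: "nat \<Rightarrow> real"
  assumes nonneg: "\<And>n. 0 \<le> t n" and "0 < k"
    and groups: "(\<lambda>m. sum t {m * k..<m * k + k}) sums S"
  shows "t sums S"
proof -
  have partial: "sum t {..<m * k} = (\<Sum>j<m. sum t {j * k..<j * k + k})" for m
    by (simp add: sum.nat_group)
  have "sum t {..<N} \<le> S" for N
  proof -
    have "sum t {..<N} \<le> sum t {..<N * k}"
      using \<open>0 < k\<close> nonneg by (intro sum_mono2) auto
    also have "\<dots> \<le> S"
      unfolding partial using sum_le_suminf[OF sums_summable[OF groups]] sums_unique[OF groups]
      by (simp add: nonneg sum_nonneg)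
    finally show ?thesis .
  qed
  then have "summable t"
    using nonneg summableI_nonneg_bounded by blast
  have "(\<lambda>m. sum t {..<m * k}) \<longlonglongrightarrow> suminf t"
    using LIMSEQ_subseq_LIMSEQ[OF summable_LIMSEQ[OF \<open>summable t\<close>], of "\<lambda>m. m * k"]
      \<open>0 < k\<close> by (simp add: strict_mono_def o_def)
  moreover have "(\<lambda>m. sum t {..<m * k}) \<longlonglongrightarrow> S"
    using groups unfolding partial sums_def .
  ultimately have "suminf t = S"
    by (rule LIMSEQ_unique)
  then show ?thesis
    using \<open>summable t\<close> summable_sums by blast
qed

lemma enumerate_fones:
  assumes "i < height u"
  shows "enumerate (fones u) i < length u" and "u ! enumerate (fones u) i"
proof -
  have "finite (fones u)" unfolding fones_def by auto
  then have "enumerate (fones u) i \<in> fones u"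
    using finite_enumerate_in_set assms unfolding height_def by blast
  then show "enumerate (fones u) i < length u" "u ! enumerate (fones u) i"
    unfolding fones_def by auto
qed

lemma enumerate_fones_mono:
  assumes "i < j" "j < height u"
  shows "enumerate (fones u) i < enumerate (fones u) j"
  using assms finite_enumerate_mono[of i j "fones u"]
  unfolding height_def fones_def by auto

lemma
  assumes h: "0 < height u"
  defines "f \<equiv> \<lambda>n. n div height u * length u + enumerate (fones u) (n mod height u)"
  shows infinite_ones_pow_inf: "infinite (ones (pow_inf u))"
    and dpos_pow_inf: "dpos (pow_inf u) n = f n"
proof -
  let ?h = "height u" and ?l = "length u" and ?e = "enumerate (fones u)"
  have l: "0 < ?l"
    using enumerate_fones(1)[OF h] by linarith
  have "strict_mono f"
    unfolding strict_mono_Suc_iff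
  proof
    fix n
    show "f n < f (Suc n)"
    proof (cases "Suc (n mod ?h) < ?h")
      case True
      then have "Suc n mod ?h = Suc (n mod ?h)" "Suc n div ?h = n div ?h"
        by (auto simp: mod_Suc div_Suc)
      then show ?thesis
        unfolding f_def using enumerate_fones_mono[OF _ True] by simp
    next
      case False
      with h have "Suc (n mod ?h) = ?h"
        using mod_less_divisor[of ?h n] by linarith
      then have "Suc n mod ?h = 0" "Suc n div ?h = Suc (n div ?h)"
        by (auto simp: mod_Suc div_Suc)
      then show ?thesis
        unfolding f_def using enumerate_fones(1)[of "n mod ?h" u] h by simp
    qed
  qed
  have "ones (pow_inf u) = range f"
  proof (intro equalityI subsetI)
    fix n assume "n \<in> ones (pow_inf u)"
    then have "n mod ?l \<in> fones u"
      unfolding ones_def pow_inf_def fones_def using l by simp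
    then obtain i where i: "i < ?h" "?e i = n mod ?l"
      using finite_enumerate_Ex[of "fones u"] unfolding height_def fones_def by auto
    have "n = f (n div ?l * ?h + i)"
      using i h unfolding f_def by simp
    then show "n \<in> range f" by blast
  next
    fix x assume "x \<in> range f"
    then obtain n where "x = f n" by blast
    moreover have "n mod ?h < ?h" using h by simp
    ultimately show "x \<in> ones (pow_inf u)"
      using enumerate_fones[of "n mod ?h" u] unfolding ones_def pow_inf_def f_def by simp
  qed
  then show "infinite (ones (pow_inf u))"
    using \<open>strict_mono f\<close> strict_mono_imp_inj_on finite_imageD infinite_UNIV_nat by metis
  show "dpos (pow_inf u) n = f n"
    unfolding dpos_def \<open>ones (pow_inf u) = range f\<close>
    using enumerate_range_strict_mono[OF \<open>strict_mono f\<close>] .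
qed

lemma fphi_div_pow_height:
  "real (fphi u) / 3 ^ height u
     = (\<Sum>i<height u. 2 ^ enumerate (fones u) i / 3 ^ (i + 1))"
proof -
  let ?h = "height u"
  have "real (fphi u) = (\<Sum>i<?h. 3 ^ (?h - 1 - i) * 2 ^ enumerate (fones u) i)"
    unfolding fphi_def by simp
  also have "\<dots> = (\<Sum>i<?h. 3 ^ ?h * (2 ^ enumerate (fones u) i / 3 ^ (i + 1)))"
  proof (rule sum.cong)
    fix i assume "i \<in> {..<?h}"
    then have "?h = (?h - 1 - i) + (i + 1)" by simp
    then have "(3::real) ^ ?h = 3 ^ (?h - 1 - i) * 3 ^ (i + 1)"
      by (metis power_add)
    then show "(3::real) ^ (?h - 1 - i) * 2 ^ enumerate (fones u) i
                 = 3 ^ ?h * (2 ^ enumerate (fones u) i / 3 ^ (i + 1))"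
      by simp
  qed simp
  finally have "real (fphi u) = 3 ^ ?h * (\<Sum>i<?h. 2 ^ enumerate (fones u) i / 3 ^ (i + 1))"
    by (simp only: sum_distrib_left)
  then show ?thesis
    by simp
qed

lemma Phi_R_has_pow_inf_C_R:
  assumes h: "0 < height u" and contracting: "(2::real) ^ length u < 3 ^ height u"
  shows "Phi_R_has (pow_inf u) (C_R u)"
proof -
  let ?h = "height u" and ?l = "length u" and ?e = "enumerate (fones u)"
  define t where "t n = (2::real) ^ dpos (pow_inf u) n / 3 ^ (n + 1)" for n
  define r where "r = (2::real) ^ ?l / 3 ^ ?h"
  define A where "A = (\<Sum>i<?h. (2::real) ^ ?e i / 3 ^ (i + 1))"
  have r: "0 \<le> r" "r < 1"
    using contracting unfolding r_def by auto
  have block: "sum t {m * ?h..<m * ?h + ?h} = r ^ m * A" for m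
  proof -
    have "t (i + m * ?h) = r ^ m * (2 ^ ?e i / 3 ^ (i + 1))" if "i < ?h" for i
    proof -
      have "t (i + m * ?h) = 2 ^ (m * ?l + ?e i) / 3 ^ (m * ?h + i + 1)"
        using that h by (simp add: t_def dpos_pow_inf add.commute)
      also have "\<dots> = r ^ m * (2 ^ ?e i / 3 ^ (i + 1))"
        by (simp add: r_def power_add power_divide mult.commute[of m] power_mult)
      finally show ?thesis .
    qed
    then show ?thesis
      using sum.shift_bounds_nat_ivl[of t 0 "m * ?h" ?h]
      by (simp add: A_def sum_distrib_left atLeast0LessThan add.commute)
  qed
  have "(\<lambda>m. r ^ m * A) sums (A / (1 - r))"
    using sums_mult2[OF geometric_sums[of r], of A] r by (simp add: divide_inverse mult.commute)
  then have "t sums (A / (1 - r))"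
    using sums_if_nonneg_group_sums[of t ?h] h unfolding block by (simp add: t_def)
  moreover have "A / (1 - r) = - C_R u"
  proof -
    have "(3::real) ^ ?h - 2 ^ ?l > 0" using contracting by simp
    moreover have "A = real (fphi u) / 3 ^ ?h"
      unfolding A_def fphi_div_pow_height ..
    ultimately show ?thesis
      unfolding C_R_def r_def by (simp add: field_simps)
  qed
  ultimately show ?thesis
    unfolding Phi_R_has_def t_def using infinite_ones_pow_inf[OF h] by auto
qed

lemma infinite_ones_if_not_ult_periodic:
  assumes "\<not> ult_periodic v"
  shows "infinite (ones v)"
proof
  assume "finite (ones v)"
  then obtain N where "\<forall>n\<in>ones v. n < N"
    using finite_nat_bounded by (auto simp: subset_eq)
  then have "\<forall>n\<ge>N. v (n + 1) = v n"
    unfolding ones_def by force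
  then show False
    using assms unfolding ult_periodic_def by blast
qed

lemma less_height_prefix_word_if_dpos_less:
  assumes inf: "infinite (ones v)" and "dpos v m < l"
  shows "m < height (prefix_word v l)"
proof -
  have fones: "fones (prefix_word v l) = {k. k < l \<and> v k}"
    unfolding prefix_word_def fones_def by auto
  have "enumerate (ones v) k \<in> fones (prefix_word v l)" if "k \<le> m" for k
  proof -
    have "enumerate (ones v) k \<le> dpos v m"
      using that inf by (simp add: dpos_def)
    then show ?thesis
      using assms(2) enumerate_in_set[OF inf] unfolding fones ones_def by auto
  qed
  then have "enumerate (ones v) ` {..m} \<subseteq> fones (prefix_word v l)"
    by auto
  then have "card (enumerate (ones v) ` {..m}) \<le> height (prefix_word v l)"
    unfolding height_def by (rule card_mono[rotated]) (simp add: fones)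
  moreover have "card (enumerate (ones v) ` {..m}) = Suc m"
    using inj_enumerate[OF inf] by (simp add: card_image inj_on_subset)
  ultimately show ?thesis by simp
qed

lemma eventually_pow2_dpos_less_pow3:
  assumes "infinite (ones v)" and "Phi_R_exists v"
  shows "\<forall>\<^sub>F i in sequentially. (2::real) ^ dpos v i < 3 ^ i"
proof -
  obtain x where "(\<lambda>i. (2::real) ^ dpos v i / 3 ^ (i + 1)) sums (- x)"
    using assms unfolding Phi_R_exists_def Phi_R_has_def by blast
  then have "(\<lambda>i. (2::real) ^ dpos v i / 3 ^ (i + 1)) \<longlonglongrightarrow> 0"
    using summable_LIMSEQ_zero sums_summable by blast
  then have "\<forall>\<^sub>F i in sequentially. (2::real) ^ dpos v i / 3 ^ (i + 1) < 1 / 3"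
    by (rule order_tendstoD) simp
  then show ?thesis
    by eventually_elim (simp add: field_simps)
qed

theorem lemma35:
  fixes v :: "nat \<Rightarrow> bool"
  assumes "\<not> ult_periodic v"
    and "Phi_R_exists v"
  shows "\<forall>\<^sub>F l in sequentially.
           Phi_R_has (pow_inf (prefix_word v l)) (C_R (prefix_word v l))"
proof -
  have inf: "infinite (ones v)"
    using assms(1) by (rule infinite_ones_if_not_ult_periodic)
  obtain I where I: "\<And>i. I \<le> i \<Longrightarrow> (2::real) ^ dpos v i < 3 ^ i"
    using eventually_pow2_dpos_less_pow3[OF inf assms(2)]
    unfolding eventually_sequentially by blast
  show ?thesis
  proof (rule eventually_sequentiallyI)
    fix l assume "Suc (dpos v I) \<le> l"
    define u where "u = prefix_word v l"
    have "I < height u"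
      using less_height_prefix_word_if_dpos_less[OF inf] \<open>Suc (dpos v I) \<le> l\<close> u_def by simp
    have "\<not> dpos v (height u) < l"
      using less_height_prefix_word_if_dpos_less[OF inf] u_def by blast
    then have "(2::real) ^ length u \<le> 2 ^ dpos v (height u)"
      by (simp add: u_def prefix_word_def)
    also have "\<dots> < 3 ^ height u"
      using I \<open>I < height u\<close> by simp
    finally show "Phi_R_has (pow_inf u) (C_R u)"
      using Phi_R_has_pow_inf_C_R \<open>I < height u\<close> by simp
  qed
qed

end
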